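(* There are countably infinitely many pairwise distinct quasi-varieties $\mathbb{V}$ (in the signature $(\wedge,\vee,0,1,\to)$) with $\mathbb{HA}\subseteq\mathbb{V}\subseteq\mathbb{IIL}$, where $\mathbb{HA}$ is the variety of Heyting algebras and $\mathbb{IIL}$ the quasi-variety of integral implicative lattices.
   Context: An integral implicative lattice is a bounded lattice $(L,\le,\wedge,\vee,0,1)$ with a binary operation $\to$ satisfying, for all $a,b,c$: (A1) $(a\vee b)\to c=(a\to c)\wedge(b\to c)$; (A2) $a\to(b\wedge c)=(a\to b)\wedge(a\to c)$; (A3) $a\le b$ iff $1\le a\to b$. $\mathbb{IIL}$ denotes the quasi-variety of integral implicative lattices. A Heyting algebra is a bounded lattice with $\to$ satisfying (A1)–(A3), distributivity, and (H1) $a\wedge(a\to b)\le b$, (H2) $b\le a\to(a\wedge b)$; $\mathbb{HA}$ denotes the variety of Heyting algebras, regarded as a subclass of $\mathbb{IIL}$. *)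

theory Defs
  imports Main
begin

datatype tm = Var nat | Bot | Top | Meet tm tm | Join tm tm | Imp tm tm

type_synonym qeq = "(tm \<times> tm) list \<times> (tm \<times> tm)"

record 'a alg =
  carrier :: "'a set"
  mt :: "'a \<Rightarrow> 'a \<Rightarrow> 'a"
  jn :: "'a \<Rightarrow> 'a \<Rightarrow> 'a"
  im :: "'a \<Rightarrow> 'a \<Rightarrow> 'a"
  zero :: 'a
  one :: 'a

definition is_alg :: "'a alg \<Rightarrow> bool" where
  "is_alg A \<longleftrightarrow> zero A \<in> carrier A \<and> one A \<in> carrier A \<and>
     (\<forall>x\<in>carrier A. \<forall>y\<in>carrier A.
        mt A x y \<in> carrier A \<and> jn A x y \<in> carrier A \<and> im A x y \<in> carrier A)"

fun eval :: "'a alg \<Rightarrow> (nat \<Rightarrow> 'a) \<Rightarrow> tm \<Rightarrow> 'a" where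
  "eval A v (Var i) = v i"
| "eval A v Bot = zero A"
| "eval A v Top = one A"
| "eval A v (Meet s t) = mt A (eval A v s) (eval A v t)"
| "eval A v (Join s t) = jn A (eval A v s) (eval A v t)"
| "eval A v (Imp s t) = im A (eval A v s) (eval A v t)"

definition holds :: "'a alg \<Rightarrow> qeq \<Rightarrow> bool" where
  "holds A q \<longleftrightarrow> (\<forall>v. (\<forall>i. v i \<in> carrier A) \<longrightarrow>
      (\<forall>(s,t)\<in>set (fst q). eval A v s = eval A v t) \<longrightarrow>
      eval A v (fst (snd q)) = eval A v (snd (snd q)))"

definition Mod :: "qeq set \<Rightarrow> nat alg set" where
  "Mod \<Sigma> = {A. is_alg A \<and> (\<forall>q\<in>\<Sigma>. holds A q)}"

definition quasivariety :: "nat alg set \<Rightarrow> bool" where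
  "quasivariety K \<longleftrightarrow> (\<exists>\<Sigma>. K = Mod \<Sigma>)"

definition le :: "'a alg \<Rightarrow> 'a \<Rightarrow> 'a \<Rightarrow> bool" where
  "le A x y \<longleftrightarrow> mt A x y = x"

definition bounded_lattice :: "'a alg \<Rightarrow> bool" where
  "bounded_lattice A \<longleftrightarrow> is_alg A \<and>
    (\<forall>x\<in>carrier A. \<forall>y\<in>carrier A. \<forall>z\<in>carrier A.
       mt A x (mt A y z) = mt A (mt A x y) z \<and> jn A x (jn A y z) = jn A (jn A x y) z \<and>
       mt A x y = mt A y x \<and> jn A x y = jn A y x \<and>
       mt A x x = x \<and> jn A x x = x \<and>
       mt A x (jn A x y) = x \<and> jn A x (mt A x y) = x \<and>
       mt A (zero A) x = zero A \<and> jn A (one A) x = one A)"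

definition IIL :: "'a alg \<Rightarrow> bool" where
  "IIL A \<longleftrightarrow> bounded_lattice A \<and>
    (\<forall>a\<in>carrier A. \<forall>b\<in>carrier A. \<forall>c\<in>carrier A.
       im A (jn A a b) c = mt A (im A a c) (im A b c) \<and>
       im A a (mt A b c) = mt A (im A a b) (im A a c) \<and>
       (le A a b \<longleftrightarrow> le A (one A) (im A a b)))"

definition HA :: "'a alg \<Rightarrow> bool" where
  "HA A \<longleftrightarrow> IIL A \<and>
    (\<forall>a\<in>carrier A. \<forall>b\<in>carrier A. \<forall>c\<in>carrier A.
       mt A a (jn A b c) = jn A (mt A a b) (mt A a c) \<and>
       le A (mt A a (im A a b)) b \<and>
       le A b (im A a (mt A a b)))"

end

theory Submission
  imports Defs
begin

text \<open>The quasi-variety \<open>V\<^sub>n\<close> is axiomatised by the defining quasi-equations of integral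
implicative lattices together with the identity
\<open>x\<^sub>0 \<le> (x\<^sub>1 \<rightarrow> x\<^sub>0) \<or> (x\<^sub>2 \<rightarrow> x\<^sub>1) \<or> \<dots> \<or> (x\<^sub>n\<^sub>+\<^sub>1 \<rightarrow> x\<^sub>n)\<close>.
Heyting algebras satisfy it because already \<open>x\<^sub>0 \<le> x\<^sub>1 \<rightarrow> x\<^sub>0\<close>. To separate the \<open>V\<^sub>n\<close>, take the
chain \<open>0 < 1 < \<dots> < k\<close> with \<open>a \<rightarrow> b = k\<close> if \<open>a \<le> b\<close> and \<open>0\<close> otherwise: there the join vanishes
exactly on strictly increasing \<open>x\<^sub>0 < \<dots> < x\<^sub>n\<^sub>+\<^sub>1\<close>, and such a sequence with \<open>x\<^sub>0 \<noteq> 0\<close> exists iff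
\<open>k \<ge> n + 2\<close>. Hence the chain lies in \<open>V\<^sub>n\<close> iff \<open>k \<le> n + 1\<close>.\<close>

definition IIL_axioms :: "qeq list" where
  "IIL_axioms = [
    ([], (Meet (Var 0) (Meet (Var 1) (Var 2)), Meet (Meet (Var 0) (Var 1)) (Var 2))),
    ([], (Join (Var 0) (Join (Var 1) (Var 2)), Join (Join (Var 0) (Var 1)) (Var 2))),
    ([], (Meet (Var 0) (Var 1), Meet (Var 1) (Var 0))),
    ([], (Join (Var 0) (Var 1), Join (Var 1) (Var 0))),
    ([], (Meet (Var 0) (Var 0), Var 0)),
    ([], (Join (Var 0) (Var 0), Var 0)),
    ([], (Meet (Var 0) (Join (Var 0) (Var 1)), Var 0)),
    ([], (Join (Var 0) (Meet (Var 0) (Var 1)), Var 0)),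
    ([], (Meet Bot (Var 0), Bot)),
    ([], (Join Top (Var 0), Top)),
    ([], (Imp (Join (Var 0) (Var 1)) (Var 2), Meet (Imp (Var 0) (Var 2)) (Imp (Var 1) (Var 2)))),
    ([], (Imp (Var 0) (Meet (Var 1) (Var 2)), Meet (Imp (Var 0) (Var 1)) (Imp (Var 0) (Var 2)))),
    ([(Meet (Var 0) (Var 1), Var 0)], (Meet Top (Imp (Var 0) (Var 1)), Top)),
    ([(Meet Top (Imp (Var 0) (Var 1)), Top)], (Meet (Var 0) (Var 1), Var 0))]"

lemma valuation_with_values:
  fixes A :: "('a, 'b) alg_scheme"
  assumes "a \<in> carrier A" "b \<in> carrier A" "c \<in> carrier A"
  obtains v :: "nat \<Rightarrow> 'a" where "\<forall>i. v i \<in> carrier A" "v 0 = a" "v 1 = b" "v 2 = c"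
proof
  let ?v = "\<lambda>i::nat. if i = 0 then a else if i = 1 then b else c"
  show "\<forall>i. ?v i \<in> carrier A" "?v 0 = a" "?v 1 = b" "?v 2 = c"
    using assms by simp_all
qed

lemma IIL_iff_holds_IIL_axioms:
  "IIL A \<longleftrightarrow> is_alg A \<and> (\<forall>q\<in>set IIL_axioms. holds A q)"
proof
  assume "IIL A"
  then show "is_alg A \<and> (\<forall>q\<in>set IIL_axioms. holds A q)"
    unfolding IIL_def bounded_lattice_def le_def
    by (simp add: IIL_axioms_def holds_def) (intro conjI allI impI; metis)
next
  assume "is_alg A \<and> (\<forall>q\<in>set IIL_axioms. holds A q)"
  then have alg: "is_alg A" and axioms: "\<forall>q\<in>set IIL_axioms. holds A q" by blast+
  have "mt A a (mt A b c) = mt A (mt A a b) c \<and> jn A a (jn A b c) = jn A (jn A a b) c \<and>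
        mt A a b = mt A b a \<and> jn A a b = jn A b a \<and> mt A a a = a \<and> jn A a a = a \<and>
        mt A a (jn A a b) = a \<and> jn A a (mt A a b) = a \<and>
        mt A (zero A) a = zero A \<and> jn A (one A) a = one A \<and>
        im A (jn A a b) c = mt A (im A a c) (im A b c) \<and>
        im A a (mt A b c) = mt A (im A a b) (im A a c) \<and>
        (mt A a b = a \<longleftrightarrow> mt A (one A) (im A a b) = one A)"
    if abc: "a \<in> carrier A" "b \<in> carrier A" "c \<in> carrier A" for a b c
  proof -
    obtain v where "\<forall>i. v i \<in> carrier A" "v 0 = a" "v 1 = b" "v (2::nat) = c"
      using valuation_with_values[OF abc] .
    with axioms show ?thesis
      unfolding holds_def IIL_axioms_def by (simp add: numeral_2_eq_2) blast
  qed
  with alg show "IIL A"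
    unfolding IIL_def bounded_lattice_def le_def by blast
qed

lemma alg_closed:
  assumes "is_alg A" "a \<in> carrier A" "b \<in> carrier A"
  shows "mt A a b \<in> carrier A" "jn A a b \<in> carrier A" "im A a b \<in> carrier A"
  using assms by (simp_all add: is_alg_def)

lemma eval_in_carrier:
  assumes "is_alg A" "\<forall>i. v i \<in> carrier A"
  shows "eval A v t \<in> carrier A"
  using assms by (induction t) (auto simp: is_alg_def)

lemma lattice_le_refl:
  assumes "bounded_lattice A" "a \<in> carrier A"
  shows "le A a a"
  using assms unfolding bounded_lattice_def le_def by blast

lemma lattice_le_trans:
  assumes "bounded_lattice A" "a \<in> carrier A" "b \<in> carrier A" "c \<in> carrier A"
    and "le A a b" "le A b c"
  shows "le A a c"
  using assms unfolding bounded_lattice_def le_def by metis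

lemma lattice_le_jn:
  assumes "bounded_lattice A" "a \<in> carrier A" "b \<in> carrier A"
  shows "le A a (jn A a b)"
  using assms unfolding bounded_lattice_def le_def by blast

lemma lattice_mt_le:
  assumes "bounded_lattice A" "a \<in> carrier A" "b \<in> carrier A"
  shows "le A (mt A a b) b"
  using assms unfolding bounded_lattice_def le_def by metis

lemma HA_le_im:
  assumes "HA A" "a \<in> carrier A" "b \<in> carrier A"
  shows "le A b (im A a b)"
proof -
  have IIL: "IIL A" and lattice: "bounded_lattice A" and alg: "is_alg A"
    using assms(1) by (simp_all add: HA_def IIL_def bounded_lattice_def)
  have aa: "im A a a \<in> carrier A" and ab: "im A a b \<in> carrier A"
    using alg_closed[OF alg] assms by simp_all
  have "le A b (im A a (mt A a b))"
    using assms by (simp add: HA_def)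
  also have "im A a (mt A a b) = mt A (im A a a) (im A a b)"
    using IIL assms by (simp add: IIL_def)
  finally show ?thesis
    using lattice_le_trans[OF lattice assms(3) alg_closed(1)[OF alg aa ab] ab]
      lattice_mt_le[OF lattice aa ab] by blast
qed

fun imp_chain_join :: "nat \<Rightarrow> tm" where
  "imp_chain_join 0 = Imp (Var 1) (Var 0)"
| "imp_chain_join (Suc n) = Join (imp_chain_join n) (Imp (Var (Suc (Suc n))) (Var (Suc n)))"

definition chain_identity :: "nat \<Rightarrow> qeq" where
  "chain_identity n = ([], (Meet (Var 0) (imp_chain_join n), Var 0))"

lemma le_eval_imp_chain_join:
  assumes lattice: "bounded_lattice A" and v: "\<forall>i. v i \<in> carrier A"
  shows "le A (im A (v 1) (v 0)) (eval A v (imp_chain_join n))"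
proof -
  have alg: "is_alg A"
    using lattice by (simp add: bounded_lattice_def)
  note in_carrier = eval_in_carrier[OF alg v]
  have im_in: "im A (v 1) (v 0) \<in> carrier A"
    using alg_closed[OF alg] v by simp
  show ?thesis
  proof (induction n)
    case 0
    show ?case
      using lattice_le_refl[OF lattice im_in] by simp
  next
    case (Suc n)
    have "le A (eval A v (imp_chain_join n)) (eval A v (imp_chain_join (Suc n)))"
      using lattice_le_jn[OF lattice] in_carrier alg_closed[OF alg] v by simp
    then show ?case
      by (rule lattice_le_trans[OF lattice im_in in_carrier in_carrier Suc.IH])
  qed
qed

lemma HA_holds_chain_identity:
  fixes A :: "'a alg"
  assumes "HA A"
  shows "holds A (chain_identity n)"
  unfolding holds_def chain_identity_def
proof (intro allI impI)
  fix v :: "nat \<Rightarrow> 'a" assume v: "\<forall>i. v i \<in> carrier A"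
  have lattice: "bounded_lattice A" and alg: "is_alg A"
    using assms by (simp_all add: HA_def IIL_def bounded_lattice_def)
  have im_in: "im A (v 1) (v 0) \<in> carrier A"
    using alg_closed[OF alg] v by simp
  have "le A (v 0) (im A (v 1) (v 0))"
    using HA_le_im[OF assms] v by simp
  then have "le A (v 0) (eval A v (imp_chain_join n))"
    by (rule lattice_le_trans[OF lattice v[rule_format] im_in eval_in_carrier[OF alg v] _
          le_eval_imp_chain_join[OF lattice v]])
  then show "eval A v (fst (snd ([], Meet (Var 0) (imp_chain_join n), Var 0))) =
      eval A v (snd (snd ([], Meet (Var 0) (imp_chain_join n), Var 0)))"
    by (simp add: le_def)
qed

definition chain_alg :: "nat \<Rightarrow> nat alg" where
  "chain_alg k = \<lparr>carrier = {0..k}, mt = min, jn = max,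
     im = (\<lambda>a b. if a \<le> b then k else 0), zero = 0, one = k\<rparr>"

lemma IIL_chain_alg: "IIL (chain_alg k)"
  unfolding IIL_def bounded_lattice_def is_alg_def le_def chain_alg_def by auto

lemma eval_chain_alg_imp_chain_join:
  "eval (chain_alg k) v (imp_chain_join n) = (if \<forall>i\<le>n. v i < v (Suc i) then 0 else k)"
  by (induction n) (auto simp: chain_alg_def le_Suc_eq)

lemma strictly_increasing_ge_add:
  fixes v :: "nat \<Rightarrow> nat"
  assumes "\<forall>i<m. v i < v (Suc i)" "j \<le> m"
  shows "v 0 + j \<le> v j"
  using assms by (induction j) (auto simp: Suc_le_eq intro: le_less_trans)

lemma holds_chain_alg_chain_identity_iff:
  "holds (chain_alg k) (chain_identity n) \<longleftrightarrow> k \<le> Suc n"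
proof
  assume holds: "holds (chain_alg k) (chain_identity n)"
  show "k \<le> Suc n"
  proof (rule ccontr)
    assume "\<not> k \<le> Suc n"
    define v where "v i = min (Suc i) k" for i
    have "\<forall>i. v i \<in> carrier (chain_alg k)"
      by (simp add: v_def chain_alg_def)
    with holds have "min (v 0) (eval (chain_alg k) v (imp_chain_join n)) = v 0"
      by (simp add: holds_def chain_identity_def chain_alg_def)
    with \<open>\<not> k \<le> Suc n\<close> show False
      by (simp add: eval_chain_alg_imp_chain_join v_def)
  qed
next
  assume k: "k \<le> Suc n"
  show "holds (chain_alg k) (chain_identity n)"
    unfolding holds_def chain_identity_def
  proof (intro allI impI)
    fix v :: "nat \<Rightarrow> nat" assume "\<forall>i. v i \<in> carrier (chain_alg k)"
    then have v_le: "v i \<le> k" for i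
      by (simp add: chain_alg_def)
    have "v 0 = 0" if "\<forall>i\<le>n. v i < v (Suc i)"
      using strictly_increasing_ge_add[of "Suc n" v "Suc n"] that v_le[of "Suc n"] k by simp
    then show "eval (chain_alg k) v (fst (snd ([], Meet (Var 0) (imp_chain_join n), Var 0))) =
        eval (chain_alg k) v (snd (snd ([], Meet (Var 0) (imp_chain_join n), Var 0)))"
      using v_le by (simp add: eval_chain_alg_imp_chain_join) (simp add: chain_alg_def)
  qed
qed

theorem lemma2p3:
  shows "\<exists>V :: nat \<Rightarrow> nat alg set. inj V \<and>
           (\<forall>n. quasivariety (V n) \<and>
                {A. HA A} \<subseteq> V n \<and> V n \<subseteq> {A. IIL A})"
proof (intro exI conjI allI)
  define V where "V n = Mod (insert (chain_identity n) (set IIL_axioms))" for n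
  have mem_V: "A \<in> V n \<longleftrightarrow> IIL A \<and> holds A (chain_identity n)" for A n
    unfolding V_def Mod_def using IIL_iff_holds_IIL_axioms by auto
  have chain_alg_mem_V: "chain_alg k \<in> V n \<longleftrightarrow> k \<le> Suc n" for k n
    by (simp add: mem_V IIL_chain_alg holds_chain_alg_chain_identity_iff)
  show "inj V"
  proof (rule injI)
    fix n m assume "V n = V m"
    then have "k \<le> Suc n \<longleftrightarrow> k \<le> Suc m" for k
      by (simp flip: chain_alg_mem_V)
    then show "n = m"
      by (metis Suc_inject order_antisym order_refl)
  qed
  fix n
  show "quasivariety (V n)"
    unfolding quasivariety_def V_def by blast
  show "{A. HA A} \<subseteq> V n"
    using mem_V HA_holds_chain_identity by (auto simp: HA_def)
  show "V n \<subseteq> {A. IIL A}"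
    using mem_V by auto
qed

end
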